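(* Let $\zeta>1$. If a distribution $\mu$ over $\{-1,+1\}^n$ is $\zeta$-marginally stable, then for every $\alpha\in(0,1)$, every $x\in\mathbb R^n_{>0}$ and every $i\in[n]$ with $x_i\ge(2\zeta)^{1/(1-\alpha)}$, $$\frac{\partial F_{\mu,\alpha}}{\partial z_i}\Big|_{z=x}\le0,$$ where $F_{\mu,\alpha}(z)=\dfrac{g_\mu(z_1^\alpha,\dots,z_n^\alpha)^{1/\alpha}}{\prod_{j=1}^n(\mu_j(+1)z_j+\mu_j(-1))}$.
   Context: $g_\mu(z)=\sum_\sigma\mu(\sigma)\prod_{j:\sigma_j=+1}z_j$; $\mu_j$ marginal at coordinate $j$; $\Omega(\cdot)$ support; $\mu_\Lambda$ marginal on $\Lambda$; $\mu^\sigma$ conditional on $\sigma\in\Omega(\mu_\Lambda)$. $\zeta$-marginal stability: for every $i\in[n]$, every $S\subseteq\Lambda\subseteq[n]\setminus\{i\}$, and every $\sigma\in\Omega(\mu_\Lambda)$, $R_i^\sigma\le\zeta$ and $R_i^\sigma\le\zeta R_i^{\sigma_S}$, where $R_i^\sigma=\mu_i^\sigma(+1)/\mu_i^\sigma(-1)$. *)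

theory Defs
  imports "HOL-Analysis.Analysis"
begin

text \<open>A configuration \<open>\<sigma> \<in> {-1,+1}^n\<close> is encoded by the set \<open>S \<subseteq> {..<n}\<close> of
  coordinates where \<open>\<sigma>_j = +1\<close>.\<close>

definition is_distribution :: "nat \<Rightarrow> (nat set \<Rightarrow> real) \<Rightarrow> bool" where
  "is_distribution n \<mu> \<longleftrightarrow> (\<forall>S\<subseteq>{..<n}. 0 \<le> \<mu> S) \<and> (\<Sum>S\<in>Pow {..<n}. \<mu> S) = 1"

definition prob_ev :: "nat \<Rightarrow> (nat set \<Rightarrow> real) \<Rightarrow> (nat set \<Rightarrow> bool) \<Rightarrow> real" where
  "prob_ev n \<mu> P = (\<Sum>S\<in>{S. S \<subseteq> {..<n} \<and> P S}. \<mu> S)"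

definition gen_poly :: "nat \<Rightarrow> (nat set \<Rightarrow> real) \<Rightarrow> (nat \<Rightarrow> real) \<Rightarrow> real" where
  "gen_poly n \<mu> z = (\<Sum>S\<in>Pow {..<n}. \<mu> S * (\<Prod>j\<in>S. z j))"

definition marg_plus :: "nat \<Rightarrow> (nat set \<Rightarrow> real) \<Rightarrow> nat \<Rightarrow> real" where
  "marg_plus n \<mu> j = prob_ev n \<mu> (\<lambda>S. j \<in> S)"

definition marg_minus :: "nat \<Rightarrow> (nat set \<Rightarrow> real) \<Rightarrow> nat \<Rightarrow> real" where
  "marg_minus n \<mu> j = prob_ev n \<mu> (\<lambda>S. j \<notin> S)"

text \<open>A partial configuration \<open>\<sigma> \<in> {-1,+1}^\<Lambda>\<close> is encoded by \<open>T \<subseteq> \<Lambda>\<close> (its +1 coordinates).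
  \<open>\<sigma> \<in> \<Omega>(\<mu>_\<Lambda>)\<close> iff \<open>\<mu>_\<Lambda>(\<sigma>) > 0\<close>.\<close>
definition in_supp_marg :: "nat \<Rightarrow> (nat set \<Rightarrow> real) \<Rightarrow> nat set \<Rightarrow> nat set \<Rightarrow> bool" where
  "in_supp_marg n \<mu> \<Lambda> T \<longleftrightarrow> T \<subseteq> \<Lambda> \<and> prob_ev n \<mu> (\<lambda>S. S \<inter> \<Lambda> = T) > 0"

definition cond_plus :: "nat \<Rightarrow> (nat set \<Rightarrow> real) \<Rightarrow> nat \<Rightarrow> nat set \<Rightarrow> nat set \<Rightarrow> real" where
  "cond_plus n \<mu> i \<Lambda> T = prob_ev n \<mu> (\<lambda>S. i \<in> S \<and> S \<inter> \<Lambda> = T) / prob_ev n \<mu> (\<lambda>S. S \<inter> \<Lambda> = T)"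

definition cond_minus :: "nat \<Rightarrow> (nat set \<Rightarrow> real) \<Rightarrow> nat \<Rightarrow> nat set \<Rightarrow> nat set \<Rightarrow> real" where
  "cond_minus n \<mu> i \<Lambda> T = prob_ev n \<mu> (\<lambda>S. i \<notin> S \<and> S \<inter> \<Lambda> = T) / prob_ev n \<mu> (\<lambda>S. S \<inter> \<Lambda> = T)"

definition ratio_R :: "nat \<Rightarrow> (nat set \<Rightarrow> real) \<Rightarrow> nat \<Rightarrow> nat set \<Rightarrow> nat set \<Rightarrow> real" where
  "ratio_R n \<mu> i \<Lambda> T = cond_plus n \<mu> i \<Lambda> T / cond_minus n \<mu> i \<Lambda> T"

text \<open>\<open>\<zeta>\<close>-marginal stability. \<open>\<sigma>_A\<close> (restriction of \<open>\<sigma>=(\<Lambda>,T)\<close> to \<open>A\<close>) is \<open>(A, T \<inter> A)\<close>.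
  Since \<open>R_i^\<sigma>\<close> is an extended-real ratio which is \<open>+\<infinity>\<close> when \<open>\<mu>_i^\<sigma>(-1) = 0\<close>, the
  requirement \<open>R_i^\<sigma> \<le> \<zeta>\<close> (finite) includes \<open>\<mu>_i^\<sigma>(-1) > 0\<close>, stated explicitly.\<close>
definition marg_stable :: "real \<Rightarrow> nat \<Rightarrow> (nat set \<Rightarrow> real) \<Rightarrow> bool" where
  "marg_stable \<zeta> n \<mu> \<longleftrightarrow>
     (\<forall>i<n. \<forall>\<Lambda> A T. \<Lambda> \<subseteq> {..<n} - {i} \<and> A \<subseteq> \<Lambda> \<and> in_supp_marg n \<mu> \<Lambda> T \<longrightarrow>
        cond_minus n \<mu> i \<Lambda> T > 0 \<and>
        ratio_R n \<mu> i \<Lambda> T \<le> \<zeta> \<and>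
        ratio_R n \<mu> i \<Lambda> T \<le> \<zeta> * ratio_R n \<mu> i A (T \<inter> A))"

definition F_fun :: "nat \<Rightarrow> (nat set \<Rightarrow> real) \<Rightarrow> real \<Rightarrow> (nat \<Rightarrow> real) \<Rightarrow> real" where
  "F_fun n \<mu> \<alpha> z = gen_poly n \<mu> (\<lambda>j. z j powr \<alpha>) powr (1 / \<alpha>) /
      (\<Prod>j<n. marg_plus n \<mu> j * z j + marg_minus n \<mu> j)"

end

theory Submission
  imports Defs
begin

text \<open>Freeze every coordinate except \<open>z\<^sub>i\<close> and let \<open>p, q\<close> be the marginals of \<open>i\<close>. Splitting the
  configurations according to \<open>\<sigma>\<^sub>i\<close> gives \<open>g\<^sub>\<mu>(z\<^sup>\<alpha>) = z\<^sub>i\<^sup>\<alpha> A + B\<close>, while the denominator of \<open>F\<close>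
  is \<open>(p z\<^sub>i + q) C\<close>; hence \<open>\<partial>F/\<partial>z\<^sub>i\<close> has the sign of \<open>A q z\<^sub>i\<^bsup>\<alpha>-1\<^esup> - B p\<close>. Marginal stability,
  comparing the conditioning on all other coordinates with the empty conditioning, gives
  \<open>\<mu>(T \<union> {i}) q \<le> \<zeta> p \<mu>(T)\<close> for every \<open>T \<subseteq> [n] - {i}\<close>, so \<open>A q \<le> \<zeta> p B\<close>, and the derivative is
  nonpositive as soon as \<open>z\<^sub>i\<^bsup>1-\<alpha>\<^esup> \<ge> \<zeta>\<close>.\<close>

lemma sum_Pow_insert:
  assumes "finite A" "a \<notin> A"
  shows "(\<Sum>S\<in>Pow (insert a A). f S) = (\<Sum>T\<in>Pow A. f (insert a T) + f T)"
proof -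
  have "inj_on (insert a) (Pow A)" using assms(2) by (auto simp: inj_on_def insert_ident)
  moreover have "Pow A \<inter> insert a ` Pow A = {}" using assms(2) by auto
  ultimately show ?thesis
    using assms(1) by (simp add: Pow_insert sum.union_disjoint sum.reindex sum.distrib add.commute)
qed

lemma sum_Pow_lessThan_remove:
  fixes n :: nat
  assumes "i < n"
  shows "(\<Sum>S\<in>Pow {..<n}. f S) = (\<Sum>T\<in>Pow ({..<n} - {i}). f (insert i T) + f T)"
proof -
  have "finite ({..<n} - {i})" "i \<notin> {..<n} - {i}" by auto
  from sum_Pow_insert[OF this, of f] show ?thesis using assms by (simp add: insert_absorb)
qed

lemma is_distribution_nonneg: "is_distribution n \<mu> \<Longrightarrow> S \<subseteq> {..<n} \<Longrightarrow> 0 \<le> \<mu> S"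
  unfolding is_distribution_def by blast

lemma prob_ev_eq_sum_if: "prob_ev n \<mu> P = (\<Sum>S\<in>Pow {..<n}. if P S then \<mu> S else 0)"
  unfolding prob_ev_def by (rule sum.mono_neutral_cong_left) auto

lemma prob_ev_nonneg: "is_distribution n \<mu> \<Longrightarrow> 0 \<le> prob_ev n \<mu> P"
  unfolding is_distribution_def prob_ev_def by (auto intro: sum_nonneg)

lemma prob_ev_True: "is_distribution n \<mu> \<Longrightarrow> prob_ev n \<mu> (\<lambda>_. True) = 1"
  unfolding is_distribution_def prob_ev_def by (simp add: Pow_def)

lemma marg_plus_nonneg: "is_distribution n \<mu> \<Longrightarrow> 0 \<le> marg_plus n \<mu> j"
  unfolding marg_plus_def by (rule prob_ev_nonneg)

lemma prob_ev_fix_complement: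
  assumes "i < n" "T0 \<subseteq> {..<n} - {i}"
  shows "prob_ev n \<mu> (\<lambda>S. P S \<and> S \<inter> ({..<n} - {i}) = T0) =
    (if P (insert i T0) then \<mu> (insert i T0) else 0) + (if P T0 then \<mu> T0 else 0)"
proof -
  let ?L = "{..<n} - {i}"
  have "insert i T \<inter> ?L = T \<and> T \<inter> ?L = T" if "T \<in> Pow ?L" for T
    using that by auto
  then have "prob_ev n \<mu> (\<lambda>S. P S \<and> S \<inter> ?L = T0) = (\<Sum>T\<in>Pow ?L. if T = T0 then
      (if P (insert i T) then \<mu> (insert i T) else 0) + (if P T then \<mu> T else 0) else 0)"
    unfolding prob_ev_eq_sum_if sum_Pow_lessThan_remove[OF assms(1)] by (intro sum.cong) auto
  then show ?thesis using assms(2) by simp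
qed

definition gen_poly_plus :: "nat \<Rightarrow> (nat set \<Rightarrow> real) \<Rightarrow> nat \<Rightarrow> (nat \<Rightarrow> real) \<Rightarrow> real" where
  "gen_poly_plus n \<mu> i z = (\<Sum>T\<in>Pow ({..<n} - {i}). \<mu> (insert i T) * (\<Prod>j\<in>T. z j))"

definition gen_poly_minus :: "nat \<Rightarrow> (nat set \<Rightarrow> real) \<Rightarrow> nat \<Rightarrow> (nat \<Rightarrow> real) \<Rightarrow> real" where
  "gen_poly_minus n \<mu> i z = (\<Sum>T\<in>Pow ({..<n} - {i}). \<mu> T * (\<Prod>j\<in>T. z j))"

lemma gen_poly_split_coordinate:
  assumes "i < n"
  shows "gen_poly n \<mu> z = z i * gen_poly_plus n \<mu> i z + gen_poly_minus n \<mu> i z"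
proof -
  have "(\<Sum>T\<in>Pow ({..<n} - {i}). \<mu> (insert i T) * (\<Prod>j\<in>insert i T. z j)) = z i * gen_poly_plus n \<mu> i z"
    unfolding gen_poly_plus_def sum_distrib_left
  proof (intro sum.cong refl)
    fix T assume "T \<in> Pow ({..<n} - {i})"
    then have "finite T" "i \<notin> T" by (auto intro: finite_subset)
    then show "\<mu> (insert i T) * prod z (insert i T) = z i * (\<mu> (insert i T) * prod z T)" by simp
  qed
  then show ?thesis
    unfolding gen_poly_def gen_poly_minus_def sum_Pow_lessThan_remove[OF assms] sum.distrib by simp
qed

lemma gen_poly_plus_fun_upd [simp]: "gen_poly_plus n \<mu> i (z(i := t)) = gen_poly_plus n \<mu> i z"
  unfolding gen_poly_plus_def by (intro sum.cong refl arg_cong2[where f="(*)"] prod.cong) auto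

lemma gen_poly_minus_fun_upd [simp]: "gen_poly_minus n \<mu> i (z(i := t)) = gen_poly_minus n \<mu> i z"
  unfolding gen_poly_minus_def by (intro sum.cong refl arg_cong2[where f="(*)"] prod.cong) auto

lemma marg_minus_eq_gen_poly_minus:
  assumes "i < n"
  shows "marg_minus n \<mu> i = gen_poly_minus n \<mu> i (\<lambda>_. 1)"
  unfolding marg_minus_def prob_ev_eq_sum_if sum_Pow_lessThan_remove[OF assms] gen_poly_minus_def
  by (intro sum.cong) auto

lemma gen_poly_plus_nonneg:
  assumes "is_distribution n \<mu>" "i < n" "\<forall>j<n. 0 \<le> z j"
  shows "0 \<le> gen_poly_plus n \<mu> i z"
  unfolding gen_poly_plus_def using assms
  by (intro sum_nonneg mult_nonneg_nonneg prod_nonneg is_distribution_nonneg[OF assms(1)]) auto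

lemma gen_poly_minus_pos:
  assumes "is_distribution n \<mu>" "i < n" "0 < marg_minus n \<mu> i" "\<forall>j<n. 0 < z j"
  shows "0 < gen_poly_minus n \<mu> i z"
proof -
  let ?L = "{..<n} - {i}"
  have "0 < (\<Sum>T\<in>Pow ?L. \<mu> T)"
    using assms(3) unfolding marg_minus_eq_gen_poly_minus[OF assms(2)] gen_poly_minus_def by simp
  then obtain T where T: "T \<in> Pow ?L" "0 < \<mu> T"
    by (metis (no_types, lifting) not_less sum_nonpos)
  have terms_nonneg: "0 \<le> \<mu> S * (\<Prod>j\<in>S. z j)" if "S \<in> Pow ?L" for S
    using that assms(4) by (intro mult_nonneg_nonneg prod_nonneg is_distribution_nonneg[OF assms(1)])
      (auto simp: less_imp_le)
  have "0 < \<mu> T * (\<Prod>j\<in>T. z j)"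
    using T assms(4) by (intro mult_pos_pos prod_pos) auto
  also have "\<dots> \<le> gen_poly_minus n \<mu> i z"
    unfolding gen_poly_minus_def by (rule member_le_sum[OF T(1)]) (auto intro: terms_nonneg)
  finally show ?thesis .
qed

lemma in_supp_marg_empty: "is_distribution n \<mu> \<Longrightarrow> in_supp_marg n \<mu> {} {}"
  unfolding in_supp_marg_def using prob_ev_True by simp

lemma cond_minus_empty: "is_distribution n \<mu> \<Longrightarrow> cond_minus n \<mu> i {} {} = marg_minus n \<mu> i"
  unfolding cond_minus_def marg_minus_def using prob_ev_True by simp

lemma ratio_R_empty:
  "is_distribution n \<mu> \<Longrightarrow> ratio_R n \<mu> i {} {} = marg_plus n \<mu> i / marg_minus n \<mu> i"
  unfolding ratio_R_def cond_plus_def marg_plus_def cond_minus_empty using prob_ev_True by simp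

lemma marg_stableD:
  assumes "marg_stable \<zeta> n \<mu>" "i < n" "\<Lambda> \<subseteq> {..<n} - {i}" "A \<subseteq> \<Lambda>" "in_supp_marg n \<mu> \<Lambda> T"
  shows "0 < cond_minus n \<mu> i \<Lambda> T" "ratio_R n \<mu> i \<Lambda> T \<le> \<zeta> * ratio_R n \<mu> i A (T \<inter> A)"
  using assms unfolding marg_stable_def by blast+

lemma marg_stable_marg_minus_pos:
  assumes "is_distribution n \<mu>" "marg_stable \<zeta> n \<mu>" "i < n"
  shows "0 < marg_minus n \<mu> i"
  using marg_stableD(1)[OF assms(2,3) _ _ in_supp_marg_empty[OF assms(1)]]
  by (simp add: cond_minus_empty[OF assms(1)])

lemma marg_stable_affine_pos:
  assumes "is_distribution n \<mu>" "marg_stable \<zeta> n \<mu>" "j < n" "0 < t"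
  shows "0 < marg_plus n \<mu> j * t + marg_minus n \<mu> j"
  using assms marg_plus_nonneg[OF assms(1)] marg_stable_marg_minus_pos[OF assms(1-3)]
  by (intro add_nonneg_pos) auto

lemma marg_stable_atom_le:
  assumes "is_distribution n \<mu>" "marg_stable \<zeta> n \<mu>" "i < n" "T \<subseteq> {..<n} - {i}"
  shows "\<mu> (insert i T) * marg_minus n \<mu> i \<le> \<zeta> * marg_plus n \<mu> i * \<mu> T"
proof -
  let ?L = "{..<n} - {i}"
  have nonneg: "0 \<le> \<mu> (insert i T)" "0 \<le> \<mu> T"
    using assms(3,4) by (auto intro!: is_distribution_nonneg[OF assms(1)])
  show ?thesis
  proof (cases "\<mu> (insert i T) + \<mu> T = 0")
    case True
    with nonneg have "\<mu> (insert i T) = 0" "\<mu> T = 0" by linarith+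
    then show ?thesis by simp
  next
    case False
    have "i \<notin> T" using assms(4) by auto
    then have cond: "cond_plus n \<mu> i ?L T = \<mu> (insert i T) / (\<mu> (insert i T) + \<mu> T)"
        "cond_minus n \<mu> i ?L T = \<mu> T / (\<mu> (insert i T) + \<mu> T)"
        "prob_ev n \<mu> (\<lambda>S. S \<inter> ?L = T) = \<mu> (insert i T) + \<mu> T"
      unfolding cond_plus_def cond_minus_def
      using prob_ev_fix_complement[OF assms(3,4), where P="\<lambda>S. i \<in> S"]
        prob_ev_fix_complement[OF assms(3,4), where P="\<lambda>S. i \<notin> S"]
        prob_ev_fix_complement[OF assms(3,4), where P="\<lambda>_. True"]
      by simp_all
    then have "in_supp_marg n \<mu> ?L T"
      using False nonneg assms(4) unfolding in_supp_marg_def by simp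
    note stable = marg_stableD[OF assms(2,3) _ empty_subsetI this]
    have "0 < \<mu> T"
      using stable(1) False nonneg unfolding cond by (simp add: zero_less_divide_iff)
    have "ratio_R n \<mu> i ?L T = \<mu> (insert i T) / \<mu> T"
      unfolding ratio_R_def cond(1,2) using False by simp
    with stable(2) have "\<mu> (insert i T) / \<mu> T \<le> \<zeta> * (marg_plus n \<mu> i / marg_minus n \<mu> i)"
      by (simp add: ratio_R_empty[OF assms(1)])
    with \<open>0 < \<mu> T\<close> show ?thesis
      using marg_stable_marg_minus_pos[OF assms(1-3)] by (simp add: field_simps)
  qed
qed

lemma marg_stable_gen_poly_plus_le:
  assumes "is_distribution n \<mu>" "marg_stable \<zeta> n \<mu>" "i < n" "\<forall>j<n. 0 \<le> z j"
  shows "gen_poly_plus n \<mu> i z * marg_minus n \<mu> i \<le> \<zeta> * marg_plus n \<mu> i * gen_poly_minus n \<mu> i z"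
proof -
  have "gen_poly_plus n \<mu> i z * marg_minus n \<mu> i
      = (\<Sum>T\<in>Pow ({..<n} - {i}). \<mu> (insert i T) * marg_minus n \<mu> i * (\<Prod>j\<in>T. z j))"
    unfolding gen_poly_plus_def sum_distrib_right by (simp add: ac_simps)
  also have "\<dots> \<le> (\<Sum>T\<in>Pow ({..<n} - {i}). \<zeta> * marg_plus n \<mu> i * \<mu> T * (\<Prod>j\<in>T. z j))"
    using assms(4) marg_stable_atom_le[OF assms(1-3)]
    by (intro sum_mono mult_right_mono prod_nonneg) auto
  also have "\<dots> = \<zeta> * marg_plus n \<mu> i * gen_poly_minus n \<mu> i z"
    unfolding gen_poly_minus_def sum_distrib_left by (simp add: ac_simps)
  finally show ?thesis .
qed

lemma F_fun_fun_upd: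
  assumes "i < n"
  shows "F_fun n \<mu> \<alpha> (x(i := t)) =
    (t powr \<alpha> * gen_poly_plus n \<mu> i (\<lambda>j. x j powr \<alpha>) + gen_poly_minus n \<mu> i (\<lambda>j. x j powr \<alpha>)) powr (1 / \<alpha>) /
    ((\<Prod>j\<in>{..<n} - {i}. marg_plus n \<mu> j * x j + marg_minus n \<mu> j) * (marg_plus n \<mu> i * t + marg_minus n \<mu> i))"
proof -
  have "(\<lambda>j. (x(i := t)) j powr \<alpha>) = (\<lambda>j. x j powr \<alpha>)(i := t powr \<alpha>)"
    by auto
  moreover have "(\<Prod>j<n. marg_plus n \<mu> j * (x(i := t)) j + marg_minus n \<mu> j) =
      (marg_plus n \<mu> i * t + marg_minus n \<mu> i) * (\<Prod>j\<in>{..<n} - {i}. marg_plus n \<mu> j * x j + marg_minus n \<mu> j)"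
    using assms by (subst prod.remove[of _ i]) (auto intro!: prod.cong)
  ultimately show ?thesis
    unfolding F_fun_def gen_poly_split_coordinate[OF assms] by (simp add: mult.commute)
qed

lemma le_powr_if_powr_inverse_le:
  fixes a e t :: real
  assumes "0 < e" "0 \<le> a" "a powr (1 / e) \<le> t"
  shows "a \<le> t powr e"
proof -
  have "a = (a powr (1 / e)) powr e"
    using assms(1,2) by (simp add: powr_powr)
  also have "\<dots> \<le> t powr e"
    using assms by (intro powr_mono2) auto
  finally show ?thesis .
qed

lemma has_real_derivative_powr_ratio:
  fixes A B c p q \<alpha> t :: real
  assumes "0 < \<alpha>" "0 < t" "0 < t powr \<alpha> * A + B" "c * (p * t + q) \<noteq> 0"
  shows "((\<lambda>s. (s powr \<alpha> * A + B) powr (1 / \<alpha>) / (c * (p * s + q))) has_real_derivative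
    (t powr \<alpha> * A + B) powr (1 / \<alpha> - 1) * (A * q * t powr (\<alpha> - 1) - B * p) / (c * (p * t + q)\<^sup>2)) (at t)"
proof -
  define u where "u = t powr \<alpha> * A + B"
  have "((\<lambda>s. s powr \<alpha> * A + B) has_real_derivative \<alpha> * t powr (\<alpha> - 1) * A) (at t)"
    using has_real_derivative_powr[OF assms(2)] assms(2) by (auto intro!: derivative_eq_intros)
  from DERIV_fun_powr[OF this, of "1 / \<alpha>"]
  have num: "((\<lambda>s. (s powr \<alpha> * A + B) powr (1 / \<alpha>)) has_real_derivative
      u powr (1 / \<alpha> - 1) * t powr (\<alpha> - 1) * A) (at t)"
    using assms(1,3) by (simp add: u_def mult.assoc)
  have den: "((\<lambda>s. c * (p * s + q)) has_real_derivative c * p) (at t)"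
    by (auto intro!: derivative_eq_intros)
  have quotient: "((\<lambda>s. (s powr \<alpha> * A + B) powr (1 / \<alpha>) / (c * (p * s + q))) has_real_derivative
      (u powr (1 / \<alpha> - 1) * t powr (\<alpha> - 1) * A * (c * (p * t + q)) - u powr (1 / \<alpha>) * (c * p))
        / (c * (p * t + q) * (c * (p * t + q)))) (at t)"
    using DERIV_divide[OF num den assms(4)] unfolding u_def by simp
  have "u powr (1 / \<alpha>) = u powr (1 / \<alpha> - 1) * (t powr (\<alpha> - 1) * t * A + B)"
    using assms(2,3) by (simp add: u_def powr_diff powr_add[symmetric])
  then have "u powr (1 / \<alpha> - 1) * t powr (\<alpha> - 1) * A * (c * (p * t + q)) - u powr (1 / \<alpha>) * (c * p)
      = c * (u powr (1 / \<alpha> - 1) * (A * q * t powr (\<alpha> - 1) - B * p))"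
    by (simp add: algebra_simps)
  with quotient show ?thesis
    using assms(4) by (simp add: u_def power2_eq_square ac_simps)
qed

lemma deriv_powr_ratio_nonpos:
  fixes A B c p q \<alpha> t :: real
  assumes "0 < \<alpha>" "0 < t" "0 \<le> A" "0 < B" "0 < c" "0 \<le> p" "0 < q"
    and "A * q \<le> B * p * t powr (1 - \<alpha>)"
  shows "deriv (\<lambda>s. (s powr \<alpha> * A + B) powr (1 / \<alpha>) / (c * (p * s + q))) t \<le> 0"
proof -
  have "A * q * t powr (\<alpha> - 1) \<le> B * p * t powr (1 - \<alpha>) * t powr (\<alpha> - 1)"
    using assms(8) by (intro mult_right_mono) auto
  also have "\<dots> = B * p"
    using assms(2) by (simp add: powr_add[symmetric])
  finally have "A * q * t powr (\<alpha> - 1) - B * p \<le> 0" by simp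
  moreover have "0 < t powr \<alpha> * A + B"
    using assms by (intro add_nonneg_pos) auto
  moreover have "0 < p * t + q"
    using assms by (intro add_nonneg_pos) auto
  ultimately show ?thesis
    using DERIV_imp_deriv[OF has_real_derivative_powr_ratio[OF assms(1,2), of A B c p q]] assms(5)
    by (simp add: divide_nonpos_pos mult_nonneg_nonpos)
qed

theorem lemma5p3:
  fixes \<zeta> \<alpha> :: real and n i :: nat and \<mu> :: "nat set \<Rightarrow> real" and x :: "nat \<Rightarrow> real"
  assumes "\<zeta> > 1"
    and "is_distribution n \<mu>"
    and "marg_stable \<zeta> n \<mu>"
    and "0 < \<alpha>" and "\<alpha> < 1"
    and "\<forall>j<n. x j > 0"
    and "i < n"
    and "x i \<ge> (2 * \<zeta>) powr (1 / (1 - \<alpha>))"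
  shows "deriv (\<lambda>t. F_fun n \<mu> \<alpha> (x(i := t))) (x i) \<le> 0"
proof -
  let ?y = "\<lambda>j. x j powr \<alpha>"
  have y_pos: "\<forall>j<n. 0 < ?y j" using assms(6) by fastforce
  have q_pos: "0 < marg_minus n \<mu> i"
    by (rule marg_stable_marg_minus_pos[OF assms(2,3,7)])
  have B_pos: "0 < gen_poly_minus n \<mu> i ?y"
    by (rule gen_poly_minus_pos[OF assms(2,7) q_pos y_pos])
  \<comment> \<open>Only \<open>\<zeta> \<le> x i powr (1 - \<alpha>)\<close> is used; the factor 2 in the hypothesis is slack.\<close>
  have "2 * \<zeta> \<le> x i powr (1 - \<alpha>)"
    by (rule le_powr_if_powr_inverse_le) (use assms(1,5,8) in auto)
  then have "\<zeta> \<le> x i powr (1 - \<alpha>)"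
    using assms(1) by linarith
  have "gen_poly_plus n \<mu> i ?y * marg_minus n \<mu> i \<le> \<zeta> * (marg_plus n \<mu> i * gen_poly_minus n \<mu> i ?y)"
    using marg_stable_gen_poly_plus_le[OF assms(2,3,7), of ?y] by (simp add: mult.assoc)
  also have "\<dots> \<le> x i powr (1 - \<alpha>) * (marg_plus n \<mu> i * gen_poly_minus n \<mu> i ?y)"
    using \<open>\<zeta> \<le> x i powr (1 - \<alpha>)\<close> marg_plus_nonneg[OF assms(2)] B_pos
    by (intro mult_right_mono) auto
  finally have key: "gen_poly_plus n \<mu> i ?y * marg_minus n \<mu> i
      \<le> gen_poly_minus n \<mu> i ?y * marg_plus n \<mu> i * x i powr (1 - \<alpha>)"
    by (simp add: ac_simps)
  have "0 < (\<Prod>j\<in>{..<n} - {i}. marg_plus n \<mu> j * x j + marg_minus n \<mu> j)"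
    using assms(6) by (intro prod_pos marg_stable_affine_pos[OF assms(2,3)]) auto
  with key show ?thesis
    unfolding F_fun_fun_upd[OF assms(7)]
    using assms(4,6,7) q_pos B_pos marg_plus_nonneg[OF assms(2)] gen_poly_plus_nonneg[OF assms(2,7)]
    by (intro deriv_powr_ratio_nonpos) (auto simp: less_imp_le)
qed

end
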